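(* Let $G=(V,E,L)$ be a graph with loops, let $\{i,i\}\in L^+$, and let $M\subseteq N(i)$ with $i\in M$; set $d:=|M|$. Consider the variables $z_p$, $p\in V\cup E\cup L$, together with auxiliary variables $z_S$ for all $S\subseteq M$ with $|S|\ge2$ and $S\notin E$. Then the set of all such vectors satisfying $$z_{ii}\ \ge\sum_{J\subseteq M:\, i\in J}\frac{\big(\ell_d(J,M\setminus J)\big)^2}{\ell_{d-1}(J\setminus\{i\},M\setminus J)},\qquad \ell_d(J,M\setminus J)\ge 0\quad\forall J\subseteq M$$ is a closed convex set. Moreover, its projection onto the space of variables $z_p$, $p\in V\cup E\cup L$, contains $\mathrm{QP}(G)$ (i.e., it is a convex relaxation of $\mathrm{QP}(G)$).
   Context: A graph with loops is $G=(V,E,L)$: $V$ finite node set, $E$ a set of unordered pairs of distinct nodes, $L$ a set of loops $\{i,i\}$ partitioned as $L=L^-\cup L^+$ (minus/plus loops). $\mathrm{QP}(G):=\mathrm{conv}\{z\in\mathbb{R}^{V\cup E\cup L}: z_{ii}\ge z_i^2\ \forall\{i,i\}\in L^+,\ z_{ii}\le z_i^2\ \forall \{i,i\}\in L^-,\ z_{ij}=z_iz_j\ \forall \{i,j\}\in E,\ z_i\in[0,1]\ \forall i\in V\}$. For a plus loop $\{i,i\}$, $N(i):=\{j\in V:\{i,j\}\in E\cup L\}$ (so $i\in N(i)$). For $S\subseteq M$: $z_\emptyset:=1$, $z_{\{k\}}:=z_k$, and for $|S|\ge2$, $z_S$ is the edge variable if $S\in E$ and the auxiliary variable otherwise (the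 loop variable $z_{ii}$ is distinct). For disjoint $J_1,J_2$ with $|J_1\cup J_2|=d$, $\ell_d(J_1,J_2):=\sum_{t\subseteq J_2}(-1)^{|t|}z_{J_1\cup t}$. Each $u^2/v$ denotes the closed perspective: $u^2/v$ if $v>0$, $0$ if $u=v=0$, $+\infty$ if $u\neq0,v=0$. *)

theory Defs
  imports "HOL-Analysis.Analysis" "HOL-Library.Function_Algebras"
begin

text \<open>Points of the variable spaces are functions from variable indices to reals,
  equipped with the (product) topology from Function_Topology.\<close>

instantiation "fun" :: (type, real_vector) real_vector
begin
definition scaleR_fun :: "real \<Rightarrow> ('a \<Rightarrow> 'b) \<Rightarrow> 'a \<Rightarrow> 'b"
  where "scaleR_fun r f = (\<lambda>x. r *\<^sub>R f x)"
instance
  by standard (auto simp: scaleR_fun_def fun_eq_iff scaleR_add_right scaleR_add_left)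
end

text \<open>Variable indices: node variables z_i, variables z_S indexed by a set S of
  nodes with at least two elements (edge variables if S is an edge, auxiliary
  variables otherwise), and loop variables z_ii.\<close>
datatype 'a var = Node 'a | Pair "'a set" | Loop 'a

text \<open>A graph with loops (V,E,L): E is a set of 2-element subsets of V;
  loops {i,i} are represented by their node i; Lm / Lp are the minus / plus loops.\<close>
definition graph_with_loops :: "'a set \<Rightarrow> 'a set set \<Rightarrow> 'a set \<Rightarrow> 'a set \<Rightarrow> bool" where
  "graph_with_loops V E Lm Lp \<longleftrightarrow> finite V \<and>
     (\<forall>e\<in>E. \<exists>u v. u \<in> V \<and> v \<in> V \<and> u \<noteq> v \<and> e = {u, v}) \<and>
     Lm \<subseteq> V \<and> Lp \<subseteq> V \<and> Lm \<inter> Lp = {}"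

definition base_idx :: "'a set \<Rightarrow> 'a set set \<Rightarrow> 'a set \<Rightarrow> 'a set \<Rightarrow> 'a var set" where
  "base_idx V E Lm Lp = Node ` V \<union> Pair ` E \<union> Loop ` (Lm \<union> Lp)"

definition ext_idx :: "'a set \<Rightarrow> 'a set set \<Rightarrow> 'a set \<Rightarrow> 'a set \<Rightarrow> 'a set \<Rightarrow> 'a var set" where
  "ext_idx V E Lm Lp M = base_idx V E Lm Lp \<union> Pair ` {S. S \<subseteq> M \<and> 2 \<le> card S \<and> S \<notin> E}"

definition nbhd :: "'a set set \<Rightarrow> 'a set \<Rightarrow> 'a set \<Rightarrow> 'a \<Rightarrow> 'a set" where
  "nbhd E Lm Lp i = {j. {i, j} \<in> E \<or> (j = i \<and> i \<in> Lm \<union> Lp)}"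

definition QP :: "'a set \<Rightarrow> 'a set set \<Rightarrow> 'a set \<Rightarrow> 'a set \<Rightarrow> ('a var \<Rightarrow> real) set" where
  "QP V E Lm Lp = convex hull {z. (\<forall>p. p \<notin> base_idx V E Lm Lp \<longrightarrow> z p = 0) \<and>
      (\<forall>i\<in>Lp. z (Loop i) \<ge> (z (Node i))\<^sup>2) \<and>
      (\<forall>i\<in>Lm. z (Loop i) \<le> (z (Node i))\<^sup>2) \<and>
      (\<forall>u v. {u, v} \<in> E \<longrightarrow> z (Pair {u, v}) = z (Node u) * z (Node v)) \<and>
      (\<forall>i\<in>V. 0 \<le> z (Node i) \<and> z (Node i) \<le> 1)}"

definition zS :: "('a var \<Rightarrow> real) \<Rightarrow> 'a set \<Rightarrow> real" where
  "zS z S = (if S = {} then 1 else if card S = 1 then z (Node (the_elem S)) else z (Pair S))"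

text \<open>\<ell>_d(J1,J2) = \<Sum>_{t \<subseteq> J2} (-1)^|t| z_{J1 \<union> t}  (d = |J1 \<union> J2| is implicit).\<close>
definition ell :: "('a var \<Rightarrow> real) \<Rightarrow> 'a set \<Rightarrow> 'a set \<Rightarrow> real" where
  "ell z J1 J2 = (\<Sum>t\<in>Pow J2. (-1) ^ card t * zS z (J1 \<union> t))"

text \<open>Closed perspective u^2/v (extended real valued; +\<infinity> for v < 0, which
  cannot occur on the feasible set anyway).\<close>
definition persp :: "real \<Rightarrow> real \<Rightarrow> ereal" where
  "persp u v = (if v > 0 then ereal (u\<^sup>2 / v) else if u = 0 \<and> v = 0 then 0 else \<infinity>)"

definition relax_set :: "'a set \<Rightarrow> 'a set set \<Rightarrow> 'a set \<Rightarrow> 'a set \<Rightarrow> 'a set \<Rightarrow> 'a \<Rightarrow> ('a var \<Rightarrow> real) set" where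
  "relax_set V E Lm Lp M i = {z. (\<forall>p. p \<notin> ext_idx V E Lm Lp M \<longrightarrow> z p = 0) \<and>
      ereal (z (Loop i)) \<ge> (\<Sum>J\<in>{J. J \<subseteq> M \<and> i \<in> J}. persp (ell z J (M - J)) (ell z (J - {i}) (M - J))) \<and>
      (\<forall>J. J \<subseteq> M \<longrightarrow> ell z J (M - J) \<ge> 0)}"

definition proj_base :: "'a set \<Rightarrow> 'a set set \<Rightarrow> 'a set \<Rightarrow> 'a set \<Rightarrow> ('a var \<Rightarrow> real) \<Rightarrow> 'a var \<Rightarrow> real" where
  "proj_base V E Lm Lp z = (\<lambda>p. if p \<in> base_idx V E Lm Lp then z p else 0)"

end

theory Submission
  imports Defs
begin

text \<open>If all \<open>\<ell>\<^sub>d(J, M - J)\<close> are nonnegative, then \<open>0 \<le> \<ell>\<^sub>d(J, M - J) \<le> \<ell>\<^sub>d\<^sub>-\<^sub>1(J - {i}, M - J)\<close>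
  for \<open>i \<in> J\<close>, and on such pairs the perspective \<open>u\<^sup>2/v\<close> is the supremum over \<open>t\<close> of the
  functions \<open>2tu - t\<^sup>2v\<close>, which are linear in \<open>z\<close>. Hence the set is an intersection of closed
  half-spaces. For the relaxation property, a generating point of QP(G) is lifted by
  \<open>z\<^sub>S = \<Prod>\<^sub>k\<^sub>\<in>\<^sub>S z\<^sub>k\<close>; by inclusion-exclusion \<open>\<ell>\<^sub>d(J, M - J) = \<Prod>\<^sub>J z\<^sub>k \<Prod>\<^sub>M\<^sub>-\<^sub>J (1 - z\<^sub>k) \<ge> 0\<close>, and the
  perspective sum collapses to \<open>z\<^sub>i\<^sup>2 \<le> z\<^sub>i\<^sub>i\<close>. Convexity of the projected set then covers the
  convex hull.\<close>

lemma nbhd_subset_nodes: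
  assumes "graph_with_loops V E Lm Lp"
  shows "nbhd E Lm Lp i \<subseteq> V"
  using assms unfolding graph_with_loops_def nbhd_def by (auto simp: doubleton_eq_iff)

definition affine_fun :: "('a::real_vector \<Rightarrow> real) \<Rightarrow> bool" where
  "affine_fun f \<longleftrightarrow> (\<forall>x y u v. u + v = 1 \<longrightarrow> f (u *\<^sub>R x + v *\<^sub>R y) = u * f x + v * f y)"

lemma affine_fun_const: "affine_fun (\<lambda>x. c)"
  unfolding affine_fun_def by (metis distrib_right mult_1)

lemma affine_fun_apply: "affine_fun (\<lambda>f. f p)"
  by (simp add: affine_fun_def scaleR_fun_def)

lemma affine_fun_sum: "(\<And>a. a \<in> A \<Longrightarrow> affine_fun (f a)) \<Longrightarrow> affine_fun (\<lambda>x. \<Sum>a\<in>A. f a x)"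
  unfolding affine_fun_def by (simp add: sum.distrib sum_distrib_left)

lemma affine_fun_lincomb: "affine_fun f \<Longrightarrow> affine_fun g \<Longrightarrow> affine_fun (\<lambda>x. a * f x + b * g x)"
  unfolding affine_fun_def by (simp add: algebra_simps)

lemma convex_affine_fun_le: "affine_fun f \<Longrightarrow> affine_fun g \<Longrightarrow> convex {x. f x \<le> g x}"
  unfolding convex_def affine_fun_def by (auto intro!: add_mono mult_left_mono)

lemma affine_fun_zS: "affine_fun (\<lambda>z. zS z S)"
  unfolding zS_def by (cases "S = {}"; cases "card S = 1") (simp_all add: affine_fun_apply affine_fun_const)

lemma affine_fun_ell: "affine_fun (\<lambda>z. ell z A B)"
  unfolding ell_def
  using affine_fun_lincomb[OF affine_fun_zS affine_fun_const, where b=0]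
  by (intro affine_fun_sum) simp

lemma continuous_on_zS [continuous_intros]: "continuous_on S (\<lambda>z. zS z T)"
  unfolding zS_def by (cases "T = {}"; cases "card T = 1")
    (simp_all add: continuous_on_subset[OF continuous_on_product_coordinates])

lemma continuous_on_ell [continuous_intros]: "continuous_on S (\<lambda>z. ell z A B)"
  unfolding ell_def by (intro continuous_intros)

lemma ell_insert:
  assumes "finite B" "i \<notin> B"
  shows "ell z A (insert i B) = ell z A B - ell z (insert i A) B"
proof -
  have "ell z A (insert i B) = ell z A B + (\<Sum>t\<in>insert i ` Pow B. (-1)^card t * zS z (A \<union> t))"
    unfolding ell_def Pow_insert using assms by (intro sum.union_disjoint) auto
  also have "(\<Sum>t\<in>insert i ` Pow B. (-1)^card t * zS z (A \<union> t))
      = (\<Sum>t\<in>Pow B. (-1)^card (insert i t) * zS z (A \<union> insert i t))"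
    using assms(2) by (intro sum.reindex_cong[of "insert i"]) (auto intro!: inj_onI simp: insert_ident)
  also have "\<dots> = - ell z (insert i A) B"
    unfolding ell_def sum_negf[symmetric]
  proof (intro sum.cong refl)
    fix t assume "t \<in> Pow B"
    then have "finite t" "i \<notin> t" using assms finite_subset by auto
    then show "(-1)^card (insert i t) * zS z (A \<union> insert i t) = - ((-1)^card t * zS z (insert i A \<union> t))"
      by simp
  qed
  finally show ?thesis by simp
qed

lemma ell_le_ell_remove:
  assumes "finite M" and nonneg: "\<forall>J. J \<subseteq> M \<longrightarrow> 0 \<le> ell z J (M - J)"
    and "J \<subseteq> M" "i \<in> J"
  shows "ell z J (M - J) \<le> ell z (J - {i}) (M - J)"
proof -
  have "ell z (J - {i}) (insert i (M - J)) = ell z (J - {i}) (M - J) - ell z (insert i (J - {i})) (M - J)"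
    using assms(1,4) by (intro ell_insert) auto
  moreover have "M - (J - {i}) = insert i (M - J)" "insert i (J - {i}) = J" using assms(3,4) by auto
  ultimately have "ell z (J - {i}) (M - (J - {i})) = ell z (J - {i}) (M - J) - ell z J (M - J)"
    by simp
  moreover have "0 \<le> ell z (J - {i}) (M - (J - {i}))" using nonneg assms(3) by blast
  ultimately show ?thesis by simp
qed

lemma persp_eq_divide: "0 \<le> u \<Longrightarrow> u \<le> v \<Longrightarrow> persp u v = ereal (u\<^sup>2 / v)"
  by (auto simp: persp_def)

lemma tangent_le_square_divide:
  fixes u v t :: real
  assumes "0 \<le> u" "u \<le> v"
  shows "2 * t * u - t\<^sup>2 * v \<le> u\<^sup>2 / v"
proof (cases "v = 0")
  case False
  then have "u\<^sup>2 / v - (2 * t * u - t\<^sup>2 * v) = (u - t * v)\<^sup>2 / v"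
    by (simp add: field_simps power2_eq_square)
  also have "\<dots> \<ge> 0" using assms by simp
  finally show ?thesis by simp
qed (use assms in simp)

lemma sum_square_divide_le_iff:
  fixes u v :: "'b \<Rightarrow> real"
  assumes "\<And>a. a \<in> A \<Longrightarrow> 0 \<le> u a \<and> u a \<le> v a"
  shows "(\<Sum>a\<in>A. (u a)\<^sup>2 / v a) \<le> c \<longleftrightarrow> (\<forall>t. (\<Sum>a\<in>A. 2 * t a * u a - (t a)\<^sup>2 * v a) \<le> c)"
proof
  assume "(\<Sum>a\<in>A. (u a)\<^sup>2 / v a) \<le> c"
  moreover have "(\<Sum>a\<in>A. 2 * t a * u a - (t a)\<^sup>2 * v a) \<le> (\<Sum>a\<in>A. (u a)\<^sup>2 / v a)" for t
    using assms tangent_le_square_divide by (intro sum_mono) blast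
  ultimately show "\<forall>t. (\<Sum>a\<in>A. 2 * t a * u a - (t a)\<^sup>2 * v a) \<le> c"
    by (meson order_trans)
next
  assume "\<forall>t. (\<Sum>a\<in>A. 2 * t a * u a - (t a)\<^sup>2 * v a) \<le> c"
  from this[rule_format, of "\<lambda>a. u a / v a"]
  have "(\<Sum>a\<in>A. 2 * (u a / v a) * u a - (u a / v a)\<^sup>2 * v a) \<le> c" .
  moreover have "2 * (u a / v a) * u a - (u a / v a)\<^sup>2 * v a = (u a)\<^sup>2 / v a" for a
    by (cases "v a = 0") (simp_all add: field_simps power2_eq_square)
  ultimately show "(\<Sum>a\<in>A. (u a)\<^sup>2 / v a) \<le> c" by simp
qed

definition persp_minorant :: "('a var \<Rightarrow> real) \<Rightarrow> 'a set \<Rightarrow> 'a \<Rightarrow> ('a set \<Rightarrow> real) \<Rightarrow> real" where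
  "persp_minorant z M i t =
     (\<Sum>J | J \<subseteq> M \<and> i \<in> J. 2 * t J * ell z J (M - J) - (t J)\<^sup>2 * ell z (J - {i}) (M - J))"

lemma relax_set_eq_Inter:
  assumes "finite M"
  shows "relax_set V E Lm Lp M i =
    (\<Inter>p\<in>- ext_idx V E Lm Lp M. {z. z p = 0}) \<inter> (\<Inter>J\<in>Pow M. {z. 0 \<le> ell z J (M - J)}) \<inter>
    (\<Inter>t. {z. persp_minorant z M i t \<le> z (Loop i)})"
proof -
  have "ereal (z (Loop i)) \<ge> (\<Sum>J | J \<subseteq> M \<and> i \<in> J. persp (ell z J (M - J)) (ell z (J - {i}) (M - J)))
      \<longleftrightarrow> (\<forall>t. persp_minorant z M i t \<le> z (Loop i))"
    if nonneg: "\<forall>J. J \<subseteq> M \<longrightarrow> 0 \<le> ell z J (M - J)" for z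
  proof -
    have bounds: "0 \<le> ell z J (M - J) \<and> ell z J (M - J) \<le> ell z (J - {i}) (M - J)"
      if "J \<in> {J. J \<subseteq> M \<and> i \<in> J}" for J
      using ell_le_ell_remove[OF assms nonneg] nonneg that by auto
    then have "(\<Sum>J | J \<subseteq> M \<and> i \<in> J. persp (ell z J (M - J)) (ell z (J - {i}) (M - J)))
        = ereal (\<Sum>J | J \<subseteq> M \<and> i \<in> J. (ell z J (M - J))\<^sup>2 / ell z (J - {i}) (M - J))"
      by (simp add: persp_eq_divide)
    then show ?thesis
      unfolding persp_minorant_def
      using sum_square_divide_le_iff[of "{J. J \<subseteq> M \<and> i \<in> J}" "\<lambda>J. ell z J (M - J)"
          "\<lambda>J. ell z (J - {i}) (M - J)"] bounds
      by simp
  qed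
  then show ?thesis
    unfolding relax_set_def by auto
qed

lemma closed_relax_set:
  assumes "finite M"
  shows "closed (relax_set V E Lm Lp M i)"
  unfolding relax_set_eq_Inter[OF assms] persp_minorant_def
  by (intro closed_Int closed_INT ballI allI closed_Collect_eq closed_Collect_le
      continuous_intros continuous_on_product_coordinates)

lemma convex_relax_set:
  assumes "finite M"
  shows "convex (relax_set V E Lm Lp M i)"
proof -
  have "affine_fun (\<lambda>z. persp_minorant z M i t)" for t
    unfolding persp_minorant_def diff_conv_add_uminus mult_minus_left[symmetric]
    by (intro affine_fun_sum affine_fun_lincomb affine_fun_ell)
  moreover have "convex {z :: 'a var \<Rightarrow> real. z p = 0}" for p
    unfolding convex_def by (simp add: scaleR_fun_def)
  ultimately show ?thesis
    unfolding relax_set_eq_Inter[OF assms]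
    by (intro convex_Int convex_INT convex_affine_fun_le affine_fun_ell affine_fun_const
        affine_fun_apply)
qed

lemma ell_eq_prod:
  fixes X :: "'a \<Rightarrow> real"
  assumes "finite M" and zS_prod: "\<And>S. S \<subseteq> M \<Longrightarrow> zS z S = prod X S"
    and "J \<subseteq> M" "B \<subseteq> M" "J \<inter> B = {}"
  shows "ell z J B = prod X J * (\<Prod>k\<in>B. 1 - X k)"
proof -
  have fin: "finite J" "finite B" using assms finite_subset by auto
  have "ell z J B = prod X J * (\<Sum>t\<in>Pow B. (-1)^card t * prod X t)"
    unfolding ell_def sum_distrib_left
  proof (intro sum.cong refl)
    fix t assume "t \<in> Pow B"
    then have "J \<union> t \<subseteq> M" "finite t" "J \<inter> t = {}" using assms fin finite_subset by auto
    then show "(-1)^card t * zS z (J \<union> t) = prod X J * ((-1)^card t * prod X t)"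
      using zS_prod fin by (simp add: prod.union_disjoint)
  qed
  then show ?thesis using prod_diff_conv_sum[OF fin(2), of "\<lambda>_. 1" X] by simp
qed

lemma sum_Pow_prod_complement:
  fixes X :: "'a \<Rightarrow> real"
  assumes "finite B"
  shows "(\<Sum>J\<in>Pow B. prod X J * (\<Prod>k\<in>B - J. 1 - X k)) = 1"
  using prod_add[OF assms, of X "\<lambda>k. 1 - X k"] by simp

lemma persp_mult_self: "0 \<le> q \<Longrightarrow> persp (a * q) q = ereal (a\<^sup>2 * q)"
  by (auto simp: persp_def power2_eq_square)

lemma sum_containing_prod_complement:
  fixes X :: "'a \<Rightarrow> real"
  assumes "finite M" "i \<in> M"
  shows "(\<Sum>J | J \<subseteq> M \<and> i \<in> J. prod X (J - {i}) * (\<Prod>k\<in>M - J. 1 - X k)) = 1"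
proof -
  have "(\<Sum>J | J \<subseteq> M \<and> i \<in> J. prod X (J - {i}) * (\<Prod>k\<in>M - J. 1 - X k))
      = (\<Sum>J\<in>Pow (M - {i}). prod X J * (\<Prod>k\<in>(M - {i}) - J. 1 - X k))"
  proof (rule sum.reindex_bij_witness[of _ "insert i" "\<lambda>J. J - {i}"])
    fix J assume "J \<in> {J. J \<subseteq> M \<and> i \<in> J}"
    then have "M - {i} - (J - {i}) = M - J" by auto
    then show "prod X (J - {i}) * (\<Prod>k\<in>M - {i} - (J - {i}). 1 - X k)
        = prod X (J - {i}) * (\<Prod>k\<in>M - J. 1 - X k)"
      by simp
  qed (use assms(2) in auto)
  also have "\<dots> = 1"
    using assms(1) by (intro sum_Pow_prod_complement) simp
  finally show ?thesis .
qed

lemma ell_nonneg_product_point: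
  fixes X :: "'a \<Rightarrow> real"
  assumes "finite M" and "\<And>S. S \<subseteq> M \<Longrightarrow> zS z S = prod X S"
    and "\<And>k. k \<in> M \<Longrightarrow> 0 \<le> X k \<and> X k \<le> 1" and "J \<subseteq> M"
  shows "0 \<le> ell z J (M - J)"
  using assms by (auto simp: ell_eq_prod intro!: mult_nonneg_nonneg prod_nonneg)

lemma persp_sum_product_point:
  fixes X :: "'a \<Rightarrow> real"
  assumes "finite M" and zS_prod: "\<And>S. S \<subseteq> M \<Longrightarrow> zS z S = prod X S"
    and X01: "\<And>k. k \<in> M \<Longrightarrow> 0 \<le> X k \<and> X k \<le> 1" and "i \<in> M"
  shows "(\<Sum>J | J \<subseteq> M \<and> i \<in> J. persp (ell z J (M - J)) (ell z (J - {i}) (M - J)))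
    = ereal ((X i)\<^sup>2)"
proof -
  define Q where "Q J = prod X (J - {i}) * (\<Prod>k\<in>M - J. 1 - X k)" for J
  have persp_J: "persp (ell z J (M - J)) (ell z (J - {i}) (M - J)) = ereal ((X i)\<^sup>2 * Q J)"
    if "J \<in> {J. J \<subseteq> M \<and> i \<in> J}" for J
  proof -
    have "prod X J = X i * prod X (J - {i})"
      using that finite_subset[of J M] assms(1) by (simp add: prod.remove)
    moreover have "ell z J (M - J) = prod X J * (\<Prod>k\<in>M - J. 1 - X k)"
      using that by (intro ell_eq_prod[OF assms(1,2)]) auto
    ultimately have "ell z J (M - J) = X i * Q J"
      unfolding Q_def by simp
    moreover have "ell z (J - {i}) (M - J) = Q J"
      unfolding Q_def using that by (intro ell_eq_prod[OF assms(1,2)]) auto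
    moreover have "0 \<le> Q J"
      unfolding Q_def using that X01 by (intro mult_nonneg_nonneg prod_nonneg) auto
    ultimately show ?thesis by (simp add: persp_mult_self)
  qed
  have "(\<Sum>J | J \<subseteq> M \<and> i \<in> J. persp (ell z J (M - J)) (ell z (J - {i}) (M - J)))
      = (\<Sum>J | J \<subseteq> M \<and> i \<in> J. ereal ((X i)\<^sup>2 * Q J))"
    using persp_J by (rule sum.cong[OF refl])
  also have "\<dots> = ereal ((X i)\<^sup>2 * (\<Sum>J | J \<subseteq> M \<and> i \<in> J. Q J))"
    by (simp add: sum_distrib_left)
  also have "(\<Sum>J | J \<subseteq> M \<and> i \<in> J. Q J) = 1"
    unfolding Q_def using assms(1,4) by (rule sum_containing_prod_complement)
  finally show ?thesis by simp
qed

definition lift_prod :: "'a set set \<Rightarrow> 'a set \<Rightarrow> ('a var \<Rightarrow> real) \<Rightarrow> 'a var \<Rightarrow> real" where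
  "lift_prod E M x p =
     (case p of
        Pair S \<Rightarrow> if S \<notin> E \<and> S \<subseteq> M \<and> 2 \<le> card S then (\<Prod>k\<in>S. x (Node k)) else x p
      | _ \<Rightarrow> x p)"

lemma zS_lift_prod:
  assumes "graph_with_loops V E Lm Lp"
    and edges: "\<forall>u v. {u, v} \<in> E \<longrightarrow> x (Pair {u, v}) = x (Node u) * x (Node v)"
    and "finite S" "S \<subseteq> M"
  shows "zS (lift_prod E M x) S = (\<Prod>k\<in>S. x (Node k))"
proof -
  consider "S = {}" | "card S = 1" | "2 \<le> card S" "S \<in> E" | "2 \<le> card S" "S \<notin> E"
    using assms(3) card_0_eq[of S] by fastforce
  then show ?thesis
  proof cases
    case 2
    then obtain k where "S = {k}" by (rule card_1_singletonE)
    then show ?thesis by (simp add: zS_def lift_prod_def)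
  next
    case 3
    then obtain u v where "u \<noteq> v" "S = {u, v}"
      using assms(1) unfolding graph_with_loops_def by blast
    then show ?thesis using 3 edges by (simp add: zS_def lift_prod_def)
  qed (use assms(4) in \<open>auto simp: zS_def lift_prod_def\<close>)
qed

lemma
  assumes "\<forall>p. p \<notin> base_idx V E Lm Lp \<longrightarrow> x p = 0"
  shows proj_base_lift_prod: "proj_base V E Lm Lp (lift_prod E M x) = x"
    and lift_prod_eq_0: "p \<notin> ext_idx V E Lm Lp M \<Longrightarrow> lift_prod E M x p = 0"
proof -
  show "proj_base V E Lm Lp (lift_prod E M x) = x"
  proof
    fix p show "proj_base V E Lm Lp (lift_prod E M x) p = x p"
      using assms by (cases p) (auto simp: proj_base_def lift_prod_def base_idx_def)
  qed
  show "lift_prod E M x p = 0" if "p \<notin> ext_idx V E Lm Lp M"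
    using assms that by (cases p) (auto simp: lift_prod_def ext_idx_def base_idx_def)
qed

definition QP_points :: "'a set \<Rightarrow> 'a set set \<Rightarrow> 'a set \<Rightarrow> 'a set \<Rightarrow> ('a var \<Rightarrow> real) set" where
  "QP_points V E Lm Lp = {z. (\<forall>p. p \<notin> base_idx V E Lm Lp \<longrightarrow> z p = 0) \<and>
      (\<forall>i\<in>Lp. z (Loop i) \<ge> (z (Node i))\<^sup>2) \<and>
      (\<forall>i\<in>Lm. z (Loop i) \<le> (z (Node i))\<^sup>2) \<and>
      (\<forall>u v. {u, v} \<in> E \<longrightarrow> z (Pair {u, v}) = z (Node u) * z (Node v)) \<and>
      (\<forall>i\<in>V. 0 \<le> z (Node i) \<and> z (Node i) \<le> 1)}"

lemma QP_eq_convex_hull: "QP V E Lm Lp = convex hull QP_points V E Lm Lp"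
  unfolding QP_def QP_points_def ..

lemma QP_points_subset_proj_relax_set:
  assumes graph: "graph_with_loops V E Lm Lp" and "i \<in> Lp" "finite M" "M \<subseteq> V" "i \<in> M"
  shows "QP_points V E Lm Lp \<subseteq> proj_base V E Lm Lp ` relax_set V E Lm Lp M i"
proof
  fix x assume "x \<in> QP_points V E Lm Lp"
  then have base: "\<forall>p. p \<notin> base_idx V E Lm Lp \<longrightarrow> x p = 0"
    and loops: "\<forall>i\<in>Lp. (x (Node i))\<^sup>2 \<le> x (Loop i)"
    and edges: "\<forall>u v. {u, v} \<in> E \<longrightarrow> x (Pair {u, v}) = x (Node u) * x (Node v)"
    and nodes: "\<forall>k\<in>V. 0 \<le> x (Node k) \<and> x (Node k) \<le> 1"
    by (simp_all add: QP_points_def)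
  have X01: "0 \<le> x (Node k) \<and> x (Node k) \<le> 1" if "k \<in> M" for k
    using nodes that assms(4) by blast
  let ?z = "lift_prod E M x"
  have zS_prod: "zS ?z S = (\<Prod>k\<in>S. x (Node k))" if "S \<subseteq> M" for S
    using finite_subset[OF that assms(3)] that by (rule zS_lift_prod[OF graph edges])
  have "?z \<in> relax_set V E Lm Lp M i"
    unfolding relax_set_def mem_Collect_eq
  proof (intro conjI allI impI)
    show "?z p = 0" if "p \<notin> ext_idx V E Lm Lp M" for p
      using that by (rule lift_prod_eq_0[OF base])
    show "0 \<le> ell ?z J (M - J)" if "J \<subseteq> M" for J
      using assms(3) zS_prod X01 that by (rule ell_nonneg_product_point)
    have "(\<Sum>J | J \<subseteq> M \<and> i \<in> J. persp (ell ?z J (M - J)) (ell ?z (J - {i}) (M - J)))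
        = ereal ((x (Node i))\<^sup>2)"
      using assms(3) zS_prod X01 assms(5) by (rule persp_sum_product_point)
    also have "\<dots> \<le> ereal (?z (Loop i))"
      using loops assms(2) by (simp add: lift_prod_def)
    finally show "(\<Sum>J | J \<subseteq> M \<and> i \<in> J. persp (ell ?z J (M - J)) (ell ?z (J - {i}) (M - J)))
        \<le> ereal (?z (Loop i))" .
  qed
  then have "proj_base V E Lm Lp ?z \<in> proj_base V E Lm Lp ` relax_set V E Lm Lp M i"
    by (rule imageI)
  then show "x \<in> proj_base V E Lm Lp ` relax_set V E Lm Lp M i"
    by (simp only: proj_base_lift_prod[OF base])
qed

lemma linear_proj_base: "linear (proj_base V E Lm Lp)"
  by (rule linearI) (auto simp: proj_base_def scaleR_fun_def fun_eq_iff)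

theorem proposition5:
  fixes V :: "'a set" and E :: "'a set set" and Lm Lp M :: "'a set" and i :: 'a
  assumes "graph_with_loops V E Lm Lp"
    and "i \<in> Lp"
    and "M \<subseteq> nbhd E Lm Lp i"
    and "i \<in> M"
  shows "closed (relax_set V E Lm Lp M i) \<and> convex (relax_set V E Lm Lp M i) \<and>
         QP V E Lm Lp \<subseteq> proj_base V E Lm Lp ` relax_set V E Lm Lp M i"
proof -
  have M_nodes: "M \<subseteq> V" using assms(3) nbhd_subset_nodes[OF assms(1)] by (rule subset_trans)
  have "finite V" using assms(1) by (simp add: graph_with_loops_def)
  then have fin: "finite M" using M_nodes by (rule finite_subset[rotated])
  have "QP V E Lm Lp \<subseteq> proj_base V E Lm Lp ` relax_set V E Lm Lp M i"
    unfolding QP_eq_convex_hull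
  proof (rule hull_minimal)
    show "QP_points V E Lm Lp \<subseteq> proj_base V E Lm Lp ` relax_set V E Lm Lp M i"
      by (rule QP_points_subset_proj_relax_set[OF assms(1,2) fin M_nodes assms(4)])
    show "convex (proj_base V E Lm Lp ` relax_set V E Lm Lp M i)"
      using convex_relax_set[OF fin] by (rule convex_linear_image[OF linear_proj_base])
  qed
  then show ?thesis using closed_relax_set[OF fin] convex_relax_set[OF fin] by blast
qed

end
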